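(* Let $k\in\mathbb{N}$ and let $u=a_1\cdots a_n$ be a word over a finite alphabet $A$ with $x$-coordinates $x_1,\dots,x_n$ (where $x_i$ is the minimal length of an X-ranker reaching position $i$ in $u$). Run the following algorithm: initialize $n_a\gets1$ for all $a\in A$; for $i=n,n-1,\dots,1$: let $c=a_i$; if $x_i+n_c\le k+1$, then set $y_i\gets n_c$, $n_c\gets n_c+1$, and for all $a\in A$ set $n_a\gets\min(n_a,n_c)$; otherwise mark position $i$ for deletion. Let $v$ be the word obtained from $u$ by removing all marked positions. Then $u\sim_k v$.
   Context: $u\sim_k v$ iff $u$ and $v$ have the same scattered subwords of length at most $k$ (a word $b_1\cdots b_m$ is a subword of $w$ if $w=w_0b_1w_1\cdots b_mw_m$). An X-ranker is a nonempty word over $\{\mathsf X_a : a\in A\}$, length = word length; for a word $w$, $\mathsf X_a(w)$ is the smallest $a$-position of $w$ and $r\mathsf X_a(w)$ the smallest $a$-position greater than $r(w)$ (possibly undefined). *)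

theory Defs
  imports Main "HOL-Library.Sublist"
begin

text \<open>Positions of a word w are 1-based: 1..length w, letter at
  position i is w!(i-1). Position 0 is a virtual start position, so that
  X_a(w) = smallest a-position > 0 and rX_a(w) = smallest a-position > r(w).\<close>

definition next_pos :: "'a list \<Rightarrow> nat \<Rightarrow> 'a \<Rightarrow> nat option" where
  "next_pos w p a =
     (if \<exists>i. p < i \<and> i \<le> length w \<and> w ! (i - 1) = a
      then Some (LEAST i. p < i \<and> i \<le> length w \<and> w ! (i - 1) = a) else None)"

text \<open>An X-ranker X_{b1} X_{b2} ... X_{bm} is represented by the list [b1,...,bm]
  (read left to right: b1 is applied first).\<close>

fun reach :: "'a list \<Rightarrow> nat \<Rightarrow> 'a list \<Rightarrow> nat option" where
  "reach w p [] = Some p"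
| "reach w p (a # r) = (case next_pos w p a of None \<Rightarrow> None | Some q \<Rightarrow> reach w q r)"

definition ranker_pos :: "'a list \<Rightarrow> 'a list \<Rightarrow> nat option" where
  "ranker_pos r w = (if r = [] then None else reach w 0 r)"

definition xcoord :: "'a list \<Rightarrow> nat \<Rightarrow> nat" where
  "xcoord u i = (LEAST m. \<exists>r. length r = m \<and> ranker_pos r u = Some i)"

definition simk :: "nat \<Rightarrow> 'a list \<Rightarrow> 'a list \<Rightarrow> bool" where
  "simk k u v \<longleftrightarrow> (\<forall>w. length w \<le> k \<longrightarrow> (subseq w u \<longleftrightarrow> subseq w v))"

fun del_aux :: "'a list \<Rightarrow> nat \<Rightarrow> nat \<Rightarrow> ('a \<Rightarrow> nat) \<Rightarrow> 'a list" where
  "del_aux u k 0 N = []"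
| "del_aux u k (Suc i) N =
     (let c = u ! i in
      if xcoord u (Suc i) + N c \<le> k + 1
      then (let N1 = N(c := N c + 1); N2 = (\<lambda>a. min (N1 a) (N1 c))
            in del_aux u k i N2 @ [c])
      else del_aux u k i N)"

definition del_word :: "nat \<Rightarrow> 'a list \<Rightarrow> 'a list" where
  "del_word k u = del_aux u k (length u) (\<lambda>_. 1)"

end

theory Submission
  imports Defs
begin

text \<open>The algorithm scans u from right to left and keeps the suffix s of letters it has not
  deleted. Its counters satisfy the invariant that N a \<le> |t| + 1 whenever t embeds in s but
  a t does not. Suppose the letter c at position i is deleted and p is the prefix before it.
  A subword of length at most k of p c s that needs this occurrence of c has the form t1 c t2
  with t1 c not embedding in p and c t2 not embedding in s. The first condition makes t1 c an
  X-ranker reaching i, so |t1| + 1 \<ge> x_i; the invariant gives |t2| + 1 \<ge> N c; and deletion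
  means x_i + N c > k + 1, so the subword is longer than k. Hence each deletion preserves the
  congruence.\<close>

lemma next_pos_Suc:
  assumes "p < length u"
  shows "next_pos u p a = (if u ! p = a then Some (Suc p) else next_pos u (Suc p) a)"
proof (cases "u ! p = a")
  case True
  have "(LEAST i. p < i \<and> i \<le> length u \<and> u ! (i - 1) = a) = Suc p"
    by (rule Least_equality) (use True assms in auto)
  moreover have "\<exists>i. p < i \<and> i \<le> length u \<and> u ! (i - 1) = a"
    using True assms by (intro exI[of _ "Suc p"]) auto
  ultimately show ?thesis
    using True unfolding next_pos_def by simp
next
  case False
  have shift: "(p < i \<and> i \<le> length u \<and> u ! (i - 1) = a) \<longleftrightarrow>
               (Suc p < i \<and> i \<le> length u \<and> u ! (i - 1) = a)" for i
    using False by (cases "i = Suc p") auto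
  show ?thesis
    using False unfolding next_pos_def shift by simp
qed

lemma next_pos_gt:
  assumes "next_pos u p a = Some q"
  shows "p < q"
proof -
  have ex: "\<exists>i. p < i \<and> i \<le> length u \<and> u ! (i - 1) = a"
    using assms unfolding next_pos_def by (auto split: if_splits)
  then have "q = (LEAST i. p < i \<and> i \<le> length u \<and> u ! (i - 1) = a)"
    using assms unfolding next_pos_def by auto
  then show ?thesis
    using LeastI_ex[OF ex] by simp
qed

lemma reach_ge: "reach u p r = Some q \<Longrightarrow> p \<le> q"
proof (induction r arbitrary: p)
  case Nil
  then show ?case by simp
next
  case (Cons a r)
  then obtain q' where "next_pos u p a = Some q'" "reach u q' r = Some q"
    by (auto split: option.splits)
  then show ?case
    using Cons.IH next_pos_gt by fastforce
qed

lemma subseq_factor_iff_reach: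
  assumes "p \<le> j" "j \<le> length u"
  shows "subseq r (drop p (take j u)) \<longleftrightarrow> (\<exists>q. reach u p r = Some q \<and> q \<le> j)"
  using assms(1)
proof (induction r arbitrary: p)
  case Nil
  then show ?case by simp
next
  case (Cons a r)
  show ?case
    using Cons.prems
  proof (induction p rule: inc_induct)
    case base
    have "\<not> (reach u j (a # r) = Some q \<and> q \<le> j)" for q
      using next_pos_gt reach_ge by (fastforce split: option.splits)
    then show ?case by simp
  next
    case (step p)
    have factor: "drop p (take j u) = u ! p # drop (Suc p) (take j u)"
      using step.hyps assms(2) by (simp add: Cons_nth_drop_Suc[symmetric])
    have "p < length u"
      using step.hyps assms(2) by simp
    then show ?case
      using step.IH Cons.IH[of "Suc p"] step.hyps
      by (simp add: factor next_pos_Suc)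
  qed
qed

lemma xcoord_Suc_le:
  assumes "i < length u" "subseq t (take i u)" "\<not> subseq (t @ [u ! i]) (take i u)"
  shows "xcoord u (Suc i) \<le> length t + 1"
proof -
  have "subseq (t @ [u ! i]) (take (Suc i) u)"
    using assms by (simp add: take_Suc_conv_app_nth list_emb_append_mono)
  then obtain q where q: "reach u 0 (t @ [u ! i]) = Some q" "q \<le> Suc i"
    using subseq_factor_iff_reach[of 0 "Suc i" u] assms(1) by auto
  have "\<not> q \<le> i"
    using subseq_factor_iff_reach[of 0 i u] assms(1,3) q(1) by auto
  then have "ranker_pos (t @ [u ! i]) u = Some (Suc i)"
    using q unfolding ranker_pos_def by simp
  then show ?thesis
    unfolding xcoord_def by (intro Least_le exI[of _ "t @ [u ! i]"]) simp
qed

lemma subseq_Cons_not_subseq: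
  assumes "subseq t (c # s)" "\<not> subseq t s"
  obtains t' where "t = c # t'" "subseq t' s"
  using assms by (cases t) (auto split: if_splits)

definition counter_bound :: "'a list \<Rightarrow> ('a \<Rightarrow> nat) \<Rightarrow> bool" where
  "counter_bound s N \<longleftrightarrow> (\<forall>a t. subseq t s \<and> \<not> subseq (a # t) s \<longrightarrow> N a \<le> length t + 1)"

lemma counter_bound_Cons:
  assumes "counter_bound s N"
  shows "counter_bound (c # s) (\<lambda>a. min ((N(c := N c + 1)) a) ((N(c := N c + 1)) c))"
  unfolding counter_bound_def
proof (intro allI impI)
  fix a t
  assume t: "subseq t (c # s) \<and> \<not> subseq (a # t) (c # s)"
  show "min ((N(c := N c + 1)) a) ((N(c := N c + 1)) c) \<le> length t + 1"
  proof (cases "subseq t s")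
    case True
    then have "a \<noteq> c" "\<not> subseq (a # t) s"
      using t by (simp_all split: if_splits)
    moreover have "N a \<le> length t + 1"
      using True calculation(2) assms unfolding counter_bound_def by blast
    ultimately show ?thesis
      by simp
  next
    case False
    then obtain t' where "t = c # t'" "subseq t' s"
      using t by (meson subseq_Cons_not_subseq)
    moreover have "\<not> subseq (c # t') s"
      using False calculation(1) by simp
    ultimately have "N c \<le> length t' + 1"
      using assms unfolding counter_bound_def by blast
    then show ?thesis
      using \<open>t = c # t'\<close> by simp
  qed
qed

lemma simk_delete_letter:
  assumes prefix_bound: "\<And>t. subseq t p \<Longrightarrow> \<not> subseq (t @ [c]) p \<Longrightarrow> x \<le> length t + 1"
    and suffix_bound: "\<And>t. subseq t s \<Longrightarrow> \<not> subseq (c # t) s \<Longrightarrow> y \<le> length t + 1"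
    and "k + 1 < x + y"
  shows "simk k (p @ c # s) (p @ s)"
  unfolding simk_def
proof (intro allI impI iffI)
  fix t :: "'a list"
  assume "subseq t (p @ s)"
  then show "subseq t (p @ c # s)"
    by (metis list_emb_append_mono subseq_order.order_refl list_emb_Cons subseq_append_iff)
next
  fix t :: "'a list"
  assume "length t \<le> k" "subseq t (p @ c # s)"
  then obtain t\<^sub>1 t' where t: "t = t\<^sub>1 @ t'" "subseq t\<^sub>1 p" "subseq t' (c # s)"
    by (auto elim: subseq_appendE)
  show "subseq t (p @ s)"
  proof (cases "subseq t' s")
    case True
    then show ?thesis
      using t list_emb_append_mono by blast
  next
    case False
    then obtain t\<^sub>2 where t\<^sub>2: "t' = c # t\<^sub>2" "subseq t\<^sub>2 s" "\<not> subseq (c # t\<^sub>2) s"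
      using t(3) subseq_Cons_not_subseq by metis
    have "subseq (t\<^sub>1 @ [c]) p"
    proof (rule ccontr)
      assume "\<not> subseq (t\<^sub>1 @ [c]) p"
      then have "x + y \<le> length t + 1"
        using prefix_bound[OF t(2)] suffix_bound[OF t\<^sub>2(2,3)] t(1) t\<^sub>2(1) by simp
      then show False
        using \<open>length t \<le> k\<close> \<open>k + 1 < x + y\<close> by simp
    qed
    then have "subseq ((t\<^sub>1 @ [c]) @ t\<^sub>2) (p @ s)"
      using t\<^sub>2(2) list_emb_append_mono by blast
    then show ?thesis
      using t(1) t\<^sub>2(1) by simp
  qed
qed

lemma simk_trans: "simk k u v \<Longrightarrow> simk k v w \<Longrightarrow> simk k u w"
  unfolding simk_def by blast

lemma simk_del_aux:
  "i \<le> length u \<Longrightarrow> counter_bound s N \<Longrightarrow> simk k (take i u @ s) (del_aux u k i N @ s)"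
proof (induction i arbitrary: s N)
  case 0
  then show ?case by (simp add: simk_def)
next
  case (Suc i)
  define c where "c = u ! i"
  have "i < length u"
    using Suc.prems by simp
  then have split: "take (Suc i) u @ s = take i u @ c # s"
    by (simp add: take_Suc_conv_app_nth c_def)
  show ?case
  proof (cases "xcoord u (Suc i) + N c \<le> k + 1")
    case True
    then show ?thesis
      using split Suc.IH[of "c # s"] counter_bound_Cons[OF Suc.prems(2)] \<open>i < length u\<close>
      by (simp add: c_def Let_def)
  next
    case False
    have "simk k (take i u @ c # s) (take i u @ s)"
    proof (rule simk_delete_letter[where x = "xcoord u (Suc i)" and y = "N c"])
      show "xcoord u (Suc i) \<le> length t + 1"
        if "subseq t (take i u)" "\<not> subseq (t @ [c]) (take i u)" for t
        using that xcoord_Suc_le \<open>i < length u\<close> c_def by blast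
      show "N c \<le> length t + 1" if "subseq t s" "\<not> subseq (c # t) s" for t
        using that Suc.prems(2) unfolding counter_bound_def by blast
      show "k + 1 < xcoord u (Suc i) + N c"
        using False by simp
    qed
    moreover have "del_aux u k (Suc i) N = del_aux u k i N"
      using False by (simp add: c_def Let_def)
    ultimately show ?thesis
      using split Suc.IH[OF _ Suc.prems(2)] \<open>i < length u\<close> simk_trans by fastforce
  qed
qed

theorem lemma16:
  fixes k :: nat and u :: "'a list" and A :: "'a set"
  assumes "finite A" and "set u \<subseteq> A"
  shows "simk k u (del_word k u)"
proof -
  have "counter_bound [] (\<lambda>_. 1)"
    unfolding counter_bound_def by simp
  then show ?thesis
    using simk_del_aux[of "length u" u "[]" "\<lambda>_. 1" k] unfolding del_word_def by simp
qed

end
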